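(* Let $\chi\in\mathcal S(\mathbb R^m)$ with $\int\chi=1$. (i) If $\gamma(\varepsilon)=\log(1/\varepsilon)$, then every element of $\iota^\gamma_\chi(W^{-1,\infty}(\mathbb R^m))$ is of log-type, and for every $u\in L^\infty(\mathbb R^m)$, $\iota^\gamma_\chi(u)$ is of bounded type and $\partial^\alpha\iota^\gamma_\chi(u)$ is of log-type for all $|\alpha|=1$. (ii) Let $\gamma$ be an admissible scaling and $k\in\mathbb N_0$. If $u\in W^{-k,\infty}(\mathbb R^m)$, then $\iota^\gamma_\chi(u)$ is of $\gamma^k$-type. In particular, for every $u\in W^{-k,\infty}(\mathbb R^m)$ there is an admissible scaling $\gamma$ such that $\iota^\gamma_\chi(u)$ and all $\partial_j\iota^\gamma_\chi(u)$, $j=1,\dots,m$, are of log-type.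
   Context: Colombeau framework: for $q\in\mathbb N_0$, $\mathcal A_q(\mathbb R)$ is the set of $\phi_0\in\mathcal D(\mathbb R)$ with $\int\phi_0=1$ and $\int t^j\phi_0(t)\,dt=0$ for $1\le j\le q$; $\mathcal A_q(\mathbb R^m)$ is the set of $\phi=\phi_0\otimes\cdots\otimes\phi_0$ ($m$ factors) with $\phi_0\in\mathcal A_q(\mathbb R)$. For $\varepsilon>0$, $\phi_\varepsilon(x)=\varepsilon^{-m}\phi(x/\varepsilon)$, and $l(\phi_0)=\sup\{|t|:\phi_0(t)\ne0\}$. $\mathcal G(\mathbb R^m)$ is the (special-variant) Colombeau algebra: classes of moderate maps $U:\mathcal A_0(\mathbb R^m)\times\mathbb R^m\to\mathbb C$, smooth in $x$, modulo negligible ones; $U(\phi,x)$ denotes a representative. An admissible scaling is a continuous $\gamma:(0,1)\to\mathbb R_+$ with $\gamma(r)=O(1/r)$, $\gamma(r)\to\infty$, and $\gamma(sr)=O(\gamma(r))$ for each fixed $0<s<1$, as $r\to0$. Embedding: for $\chi\in\mathcal S(\mathbb R^m)$ with $\int\chi=1$ and $u\in\mathcal S'(\mathbb R^m)$, $\iota^\gamma_\chi(u)$ is the class of $(\phi,x)\mapsto u*\chi^\gamma(\phi,\cdot)(x)$, where $\chi^\gamma(\phi,x)=\gamma(l(\phi_0))^m\chi(\gamma(l(\phi_0))x)$ for $\phi=\phi_0\otimes\cdots\otimes\phi_0\in\mathcal A_0(\mathbb R^m)$. For a function $\rho:(0,1)\to\mathbb R_+$, $U\in\mathcal G$ is of $\rho$-type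 if there is $N\in\mathbb N_0$ such that for all $\phi\in\mathcal A_N(\mathbb R^m)$ there are $C>0$, $0<\eta<1$ with $\sup_y|U(\phi_\varepsilon,y)|\le N\rho(C\varepsilon)$ for $0<\varepsilon<\eta$; "log-type" means $\rho(r)=\log(1/r)$, "$\gamma^k$-type" means $\rho=\gamma^k$. $U$ is of bounded type if there is $N$ such that for all $\phi\in\mathcal A_N$ there are $C,\eta>0$ with $\sup_y|U(\phi_\varepsilon,y)|\le C$ for $0<\varepsilon<\eta$. $W^{-k,\infty}(\mathbb R^m)$ is the set of distributions $\sum_{|\beta|\le k}\partial^\beta u_\beta$ with $u_\beta\in L^\infty(\mathbb R^m)$. *)

theory Defs
  imports "HOL-Analysis.Analysis" "HOL-Library.Landau_Symbols"
begin

definition smooth1 :: "(real \<Rightarrow> complex) \<Rightarrow> bool" where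
  "smooth1 f \<longleftrightarrow> (\<exists>D. D 0 = f \<and>
      (\<forall>n t. (D n has_vector_derivative D (Suc n) t) (at t)))"

definition testfun1 :: "(real \<Rightarrow> complex) \<Rightarrow> bool" where
  "testfun1 f \<longleftrightarrow> smooth1 f \<and> compact (closure {t. f t \<noteq> 0})"

definition A1 :: "nat \<Rightarrow> (real \<Rightarrow> complex) set" where
  "A1 q = {f. testfun1 f \<and> (LINT t|lborel. f t) = 1 \<and>
      (\<forall>j. 1 \<le> j \<and> j \<le> q \<longrightarrow> (LINT t|lborel. (complex_of_real t) ^ j * f t) = 0)}"

definition lsupp :: "(real \<Rightarrow> complex) \<Rightarrow> real" where
  "lsupp f = Sup {\<bar>t\<bar> | t. f t \<noteq> 0}"

definition tensor :: "(real \<Rightarrow> complex) \<Rightarrow> real^'m \<Rightarrow> complex" where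
  "tensor f x = (\<Prod>i\<in>UNIV. f (x $ i))"

definition Am :: "nat \<Rightarrow> (real^'m \<Rightarrow> complex) set" where
  "Am q = {tensor f | f. f \<in> A1 q}"

definition lm :: "(real^'m \<Rightarrow> complex) \<Rightarrow> real" where
  "lm \<phi> = lsupp (THE f. f \<in> A1 0 \<and> tensor f = \<phi>)"

definition scale :: "real \<Rightarrow> (real^'m \<Rightarrow> complex) \<Rightarrow> real^'m \<Rightarrow> complex" where
  "scale \<epsilon> \<phi> x = complex_of_real (1 / \<epsilon> ^ CARD('m)) * \<phi> ((1 / \<epsilon>) *\<^sub>R x)"

definition pd :: "'m \<Rightarrow> (real^'m \<Rightarrow> complex) \<Rightarrow> real^'m \<Rightarrow> complex" where
  "pd j f x = vector_derivative (\<lambda>t. f (x + t *\<^sub>R axis j 1)) (at 0)"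

fun pdl :: "'m list \<Rightarrow> (real^'m \<Rightarrow> complex) \<Rightarrow> real^'m \<Rightarrow> complex" where
  "pdl [] f = f"
| "pdl (j # js) f = pd j (pdl js f)"

definition smoothm :: "(real^'m \<Rightarrow> complex) \<Rightarrow> bool" where
  "smoothm f \<longleftrightarrow> (\<forall>js. continuous_on UNIV (pdl js f) \<and>
      (\<forall>j x. (\<lambda>t. pdl js f (x + t *\<^sub>R axis j 1)) differentiable (at 0)))"

definition schwartz :: "(real^'m \<Rightarrow> complex) \<Rightarrow> bool" where
  "schwartz f \<longleftrightarrow> smoothm f \<and>
      (\<forall>js (N::nat). \<exists>C. \<forall>x. (1 + norm x) ^ N * norm (pdl js f x) \<le> C)"

definition Linf :: "(real^'m \<Rightarrow> complex) \<Rightarrow> bool" where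
  "Linf f \<longleftrightarrow> f \<in> borel_measurable lborel \<and> (\<exists>C. AE x in lborel. norm (f x) \<le> C)"

definition admissible :: "(real \<Rightarrow> real) \<Rightarrow> bool" where
  "admissible \<gamma> \<longleftrightarrow> continuous_on {0<..<1} \<gamma> \<and> (\<forall>r\<in>{0<..<1}. \<gamma> r > 0) \<and>
     \<gamma> \<in> O[at_right 0](\<lambda>r. 1 / r) \<and> filterlim \<gamma> at_top (at_right 0) \<and>
     (\<forall>s\<in>{0<..<1}. (\<lambda>r. \<gamma> (s * r)) \<in> O[at_right 0](\<gamma>))"

definition chi_gamma :: "(real \<Rightarrow> real) \<Rightarrow> (real^'m \<Rightarrow> complex) \<Rightarrow> (real^'m \<Rightarrow> complex)
    \<Rightarrow> real^'m \<Rightarrow> complex" where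
  "chi_gamma \<gamma> \<kappa> \<phi> x = complex_of_real ((\<gamma> (lm \<phi>)) ^ CARD('m)) * \<kappa> (\<gamma> (lm \<phi>) *\<^sub>R x)"

text \<open>Representative of iota(u) for u in L infinity: (phi,x) |-> (u * chi^gamma(phi,.))(x)\<close>
definition emb_Linf :: "(real \<Rightarrow> real) \<Rightarrow> (real^'m \<Rightarrow> complex) \<Rightarrow> (real^'m \<Rightarrow> complex)
    \<Rightarrow> (real^'m \<Rightarrow> complex) \<Rightarrow> real^'m \<Rightarrow> complex" where
  "emb_Linf \<gamma> \<kappa> u \<phi> x = (LINT y|lborel. u y * chi_gamma \<gamma> \<kappa> \<phi> (x - y))"

text \<open>Representative of iota(u) for u = sum_{length js <= k} d_js v_js in W^{-k,infinity}:
  (u * psi)(x) = sum_js <d_js v_js, psi(x - .)> = sum_js int v_js(y) (d_js psi)(x - y) dy\<close>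
definition emb_W :: "(real \<Rightarrow> real) \<Rightarrow> (real^'m \<Rightarrow> complex) \<Rightarrow> nat
    \<Rightarrow> ('m list \<Rightarrow> real^'m \<Rightarrow> complex) \<Rightarrow> (real^'m \<Rightarrow> complex) \<Rightarrow> real^'m \<Rightarrow> complex" where
  "emb_W \<gamma> \<kappa> k v \<phi> x =
     (\<Sum>js\<in>{js. length js \<le> k}. LINT y|lborel. v js y * pdl js (chi_gamma \<gamma> \<kappa> \<phi>) (x - y))"

definition rho_type :: "(real \<Rightarrow> real) \<Rightarrow> ((real^'m \<Rightarrow> complex) \<Rightarrow> real^'m \<Rightarrow> complex) \<Rightarrow> bool" where
  "rho_type \<rho> U \<longleftrightarrow> (\<exists>N::nat. \<forall>\<phi>\<in>Am N. \<exists>C>0. \<exists>\<eta>. 0 < \<eta> \<and> \<eta> < 1 \<and>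
      (\<forall>\<epsilon>. 0 < \<epsilon> \<and> \<epsilon> < \<eta> \<longrightarrow> (\<forall>y. norm (U (scale \<epsilon> \<phi>) y) \<le> real N * \<rho> (C * \<epsilon>))))"

definition bounded_type :: "((real^'m \<Rightarrow> complex) \<Rightarrow> real^'m \<Rightarrow> complex) \<Rightarrow> bool" where
  "bounded_type U \<longleftrightarrow> (\<exists>N::nat. \<forall>\<phi>\<in>Am N. \<exists>C>0. \<exists>\<eta>>0.
      (\<forall>\<epsilon>. 0 < \<epsilon> \<and> \<epsilon> < \<eta> \<longrightarrow> (\<forall>y. norm (U (scale \<epsilon> \<phi>) y) \<le> C)))"

definition logfun :: "real \<Rightarrow> real" where
  "logfun r = ln (1 / r)"

end

theory Submission
  imports Defs "HOL-Probability.Sinc_Integral" "HOL-Real_Asymp.Real_Asymp"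
begin

text \<open>
  The representative of \<open>\<iota>\<^sup>\<gamma>\<^sub>\<chi>(u)\<close> at \<open>\<phi>\<close> is a finite sum of convolutions
  \<open>v\<^sub>\<beta> * \<partial>\<^sup>\<beta>\<chi>\<^sub>\<Gamma>\<close> of \<open>L\<^sup>\<infinity>\<close> functions with derivatives of the dilated
  kernel \<open>\<chi>\<^sub>\<Gamma>(x) = \<Gamma>\<^sup>m \<chi>(\<Gamma> x)\<close>, where \<open>\<Gamma> = \<gamma>(l(\<phi>))\<close>.
  Since \<open>\<parallel>\<partial>\<^sup>\<beta>\<chi>\<^sub>\<Gamma>\<parallel>\<^sub>1 = \<Gamma>\<^bsup>|\<beta>|\<^esup> \<parallel>\<partial>\<^sup>\<beta>\<chi>\<parallel>\<^sub>1\<close>, Young's inequality bounds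
  the representative, and (after differentiating under the integral) each of its
  first derivatives, by a constant times \<open>\<Gamma>\<^sup>k\<close> resp. \<open>\<Gamma>\<^bsup>k+1\<^esup>\<close>.
  For \<open>\<phi> = \<phi>\<^sub>0 \<otimes> \<dots> \<otimes> \<phi>\<^sub>0\<close> one has \<open>l(\<phi>\<^sub>\<epsilon>) = l(\<phi>) \<epsilon>\<close>, so these bounds become
  \<open>C \<gamma>(l(\<phi>) \<epsilon>)\<^sup>k\<close>. Part (i) is the case \<open>\<gamma> = log(1/\<cdot>)\<close>; for the final claim
  the scaling \<open>\<gamma> = log(1/\<cdot>)\<^bsup>1/(k+1)\<^esup>\<close> is admissible and makes \<open>\<gamma>\<^bsup>k+1\<^esup>\<close> logarithmic.
\<close>

section \<open>Lebesgue integrals over Euclidean space\<close>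

lemma integrable_inverse_1_plus_square_lborel:
  "integrable lborel (\<lambda>t::real. inverse (1 + t^2))"
proof -
  have "set_integrable lborel (einterval (-\<infinity>) \<infinity>) (\<lambda>x::real. inverse (1 + x^2))"
    by (rule integrable_inverse_1_plus_square)
  moreover have "einterval (-\<infinity>) \<infinity> = (UNIV :: real set)" by (auto simp: einterval_def)
  ultimately show ?thesis by (simp add: set_integrable_def)
qed

lemma inverse_one_plus_norm_power_le_prod:
  fixes x :: "'a::euclidean_space"
  shows "1 / (1 + norm x) ^ (2 * DIM('a)) \<le> (\<Prod>b\<in>Basis. inverse (1 + (x \<bullet> b)^2))"
proof -
  have le: "(\<Prod>b\<in>(Basis::'a set). 1 + (x \<bullet> b)^2) \<le> (\<Prod>b\<in>(Basis::'a set). (1 + norm x)^2)"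
  proof (rule prod_mono)
    fix b :: 'a assume "b \<in> Basis"
    then have "(x \<bullet> b)^2 \<le> (norm x)^2"
      using Basis_le_norm by (metis abs_le_square_iff abs_norm_cancel)
    moreover have "(1 + norm x)^2 = 1 + 2 * norm x + (norm x)^2"
      by (simp add: power2_eq_square algebra_simps)
    ultimately show "0 \<le> 1 + (x \<bullet> b)^2 \<and> 1 + (x \<bullet> b)^2 \<le> (1 + norm x)^2"
      using norm_ge_zero[of x] zero_le_power2[of "x \<bullet> b"] by linarith
  qed
  have "(\<Prod>b\<in>(Basis::'a set). (1 + norm x)^2) = (1 + norm x) ^ (2 * DIM('a))"
    by (simp add: power_mult[symmetric] mult.commute)
  moreover have "0 < (\<Prod>b\<in>(Basis::'a set). 1 + (x \<bullet> b)^2)"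
    by (intro prod_pos) (auto simp: add_pos_nonneg)
  ultimately have "1 / (1 + norm x) ^ (2 * DIM('a)) \<le> inverse (\<Prod>b\<in>Basis. 1 + (x \<bullet> b)^2)"
    using le by (simp add: divide_simps)
  then show ?thesis by (simp add: prod_inversef[symmetric])
qed

lemma integrable_inverse_one_plus_norm_power:
  "integrable lborel (\<lambda>x::'a::euclidean_space. 1 / (1 + norm x) ^ (2 * DIM('a)))"
proof -
  interpret P: product_sigma_finite "\<lambda>_::'a. lborel :: real measure"
    by (simp add: product_sigma_finite_def lborel.sigma_finite_measure_axioms)
  let ?T = "\<lambda>f. \<Sum>b\<in>Basis. f b *\<^sub>R (b::'a)"
  let ?G = "\<lambda>x::'a. 1 / (1 + norm x) ^ (2 * DIM('a))"
  have "integrable (PiM Basis (\<lambda>_. lborel)) (\<lambda>f. \<Prod>b\<in>(Basis::'a set). inverse (1 + (f b)^2::real))"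
    using P.product_integrable_prod[where f="\<lambda>_ t. inverse (1 + t^2)" and I="Basis::'a set"]
      integrable_inverse_1_plus_square_lborel by simp
  then have "integrable (PiM Basis (\<lambda>_. lborel)) (\<lambda>f. ?G (?T f))"
  proof (rule Bochner_Integration.integrable_bound)
    show "(\<lambda>f. ?G (?T f)) \<in> borel_measurable (PiM Basis (\<lambda>_. lborel))" by measurable
    show "AE f in PiM Basis (\<lambda>_. lborel).
        norm (?G (?T f)) \<le> norm (\<Prod>b\<in>(Basis::'a set). inverse (1 + (f b)^2))"
    proof (intro AE_I2)
      fix f :: "'a \<Rightarrow> real"
      have "?T f \<bullet> b = f b" if "b \<in> Basis" for b
        using that by (simp add: inner_sum_left inner_Basis if_distrib cong: if_cong)
      then have "(\<Prod>b\<in>Basis. inverse (1 + (?T f \<bullet> b)^2)) = (\<Prod>b\<in>Basis. inverse (1 + (f b)^2))"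
        by (intro prod.cong) auto
      then show "norm (?G (?T f)) \<le> norm (\<Prod>b\<in>(Basis::'a set). inverse (1 + (f b)^2))"
        using inverse_one_plus_norm_power_le_prod[of "?T f"]
        by (simp add: prod_nonneg abs_prod[symmetric])
    qed
  qed
  then have "integrable (distr (PiM Basis (\<lambda>_. lborel)) borel ?T) ?G"
    by (subst integrable_distr_eq) auto
  then show ?thesis by (simp add: lborel_eq[symmetric])
qed

lemma nn_integral_lborel_affine:
  fixes f :: "'a::euclidean_space \<Rightarrow> ennreal"
  assumes [measurable]: "f \<in> borel_measurable borel" and c: "c \<noteq> 0"
  shows "(\<integral>\<^sup>+x. f x \<partial>lborel) = ennreal (\<bar>c\<bar>^DIM('a)) * (\<integral>\<^sup>+x. f (t + c *\<^sub>R x) \<partial>lborel)"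
  by (subst lborel_affine[OF c, of t])
     (simp add: nn_integral_density nn_integral_distr nn_integral_cmult)

lemma integrable_lborel_affine:
  fixes f :: "'a::euclidean_space \<Rightarrow> 'b :: {banach, second_countable_topology}"
  assumes f: "integrable lborel f" and c: "c \<noteq> 0"
  shows "integrable lborel (\<lambda>x. f (t + c *\<^sub>R x))"
  using f f[THEN borel_measurable_integrable] c unfolding integrable_iff_bounded
  by (subst (asm) nn_integral_lborel_affine[where c=c and t=t]) (auto simp: ennreal_mult_less_top)

lemma integral_lborel_affine:
  fixes f :: "'a::euclidean_space \<Rightarrow> 'b :: {banach, second_countable_topology}"
  assumes f: "integrable lborel f" and c: "c \<noteq> 0"
  shows "(\<integral>x. f x \<partial>lborel) = \<bar>c\<bar>^DIM('a) *\<^sub>R (\<integral>x. f (t + c *\<^sub>R x) \<partial>lborel)"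
  using c f f[THEN borel_measurable_integrable] integrable_lborel_affine[OF f c, of t]
  by (subst lborel_affine[OF c, of t]) (simp add: integral_density integral_distr)

lemma integrable_lborel_reflect_shift:
  fixes G :: "'a::euclidean_space \<Rightarrow> 'b :: {banach, second_countable_topology}"
  assumes "integrable lborel G"
  shows "integrable lborel (\<lambda>y. G (w - y))"
  using integrable_lborel_affine[OF assms, of "-1" w] by simp

lemma integral_lborel_reflect_shift:
  fixes G :: "'a::euclidean_space \<Rightarrow> 'b :: {banach, second_countable_topology}"
  assumes "integrable lborel G"
  shows "(LINT y|lborel. G (w - y)) = (LINT y|lborel. G y)"
  using integral_lborel_affine[OF assms, of "-1" w] by simp

lemma AE_norm_bound_nonneg:
  fixes v :: "'a::euclidean_space \<Rightarrow> 'b::real_normed_vector"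
  assumes "AE y in lborel. norm (v y) \<le> B"
  shows "0 \<le> B"
proof (rule ccontr)
  assume "\<not> 0 \<le> B"
  with assms have "AE y::'a in lborel. False"
    by (rule_tac AE_mp) (auto intro!: AE_I2 simp: order_trans[OF norm_ge_zero])
  then have "ae_filter (lborel::'a measure) = bot" using trivial_limit_def by blast
  then show False by (simp add: ae_filter_eq_bot_iff)
qed

lemma integrable_bounded_mult:
  fixes v G :: "'a::euclidean_space \<Rightarrow> complex"
  assumes v: "v \<in> borel_measurable lborel" and B: "AE y in lborel. norm (v y) \<le> B"
    and G: "integrable lborel G"
  shows "integrable lborel (\<lambda>y. v y * G y)"
proof (rule Bochner_Integration.integrable_bound[where f="\<lambda>y. B * norm (G y)"])
  have B0: "0 \<le> B" by (rule AE_norm_bound_nonneg[OF B])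
  show "integrable lborel (\<lambda>y. B * norm (G y))" using G by auto
  show "(\<lambda>y. v y * G y) \<in> borel_measurable lborel"
    using v G[THEN borel_measurable_integrable] by measurable
  show "AE y in lborel. norm (v y * G y) \<le> norm (B * norm (G y))"
    using B by eventually_elim (simp add: norm_mult mult_right_mono abs_mult B0)
qed

lemma norm_integral_bounded_mult_le:
  fixes v G :: "'a::euclidean_space \<Rightarrow> complex"
  assumes v: "v \<in> borel_measurable lborel" and B: "AE y in lborel. norm (v y) \<le> B"
    and G: "integrable lborel G"
  shows "norm (LINT y|lborel. v y * G y) \<le> B * (LINT y|lborel. norm (G y))"
proof -
  have "norm (LINT y|lborel. v y * G y) \<le> (LINT y|lborel. norm (v y * G y))"
    by (rule integral_norm_bound)
  also have "\<dots> \<le> (LINT y|lborel. B * norm (G y))"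
  proof (rule integral_mono_AE)
    show "integrable lborel (\<lambda>y. norm (v y * G y))"
      using integrable_bounded_mult[OF v B G] by auto
    show "integrable lborel (\<lambda>y. B * norm (G y))" using G by auto
    show "AE y in lborel. norm (v y * G y) \<le> B * norm (G y)"
      using B by eventually_elim (simp add: norm_mult mult_right_mono)
  qed
  finally show ?thesis by simp
qed

section \<open>Differentiation of convolutions under the integral sign\<close>

lemma norm_diff_le_vector_derivative_bound:
  fixes f f' :: "real \<Rightarrow> 'b::real_normed_vector"
  assumes d: "\<And>s. s \<in> closed_segment a b \<Longrightarrow> (f has_vector_derivative f' s) (at s)"
    and bd: "\<And>s. s \<in> closed_segment a b \<Longrightarrow> norm (f' s) \<le> B"
  shows "norm (f b - f a) \<le> B * \<bar>b - a\<bar>"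
proof -
  have "norm (f b - f a) \<le> B * norm (b - a)"
  proof (rule differentiable_bound[where f'="\<lambda>s h. h *\<^sub>R f' s" and S="closed_segment a b"])
    show "(f has_derivative (\<lambda>h. h *\<^sub>R f' x)) (at x within closed_segment a b)"
      if "x \<in> closed_segment a b" for x
      using d[OF that] unfolding has_vector_derivative_def
      by (rule has_derivative_at_withinI)
    show "onorm (\<lambda>h. h *\<^sub>R f' x) \<le> B" if "x \<in> closed_segment a b" for x
    proof (rule onorm_le)
      fix h :: real
      have "norm (h *\<^sub>R f' x) \<le> \<bar>h\<bar> * B" using bd[OF that] by (simp add: mult_left_mono)
      then show "norm (h *\<^sub>R f' x) \<le> B * norm h" by (simp add: mult.commute)
    qed
  qed auto
  then show ?thesis by simp
qed

lemma taylor_remainder_along_direction_le: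
  fixes g g1 g2 :: "'a::real_normed_vector \<Rightarrow> 'b::real_normed_vector"
  assumes dg: "\<And>s. ((\<lambda>t. g (z + t *\<^sub>R e)) has_vector_derivative g1 (z + s *\<^sub>R e)) (at s)"
    and dg1: "\<And>s. ((\<lambda>t. g1 (z + t *\<^sub>R e)) has_vector_derivative g2 (z + s *\<^sub>R e)) (at s)"
    and g2_le: "\<And>s. \<bar>s\<bar> \<le> 1 \<Longrightarrow> norm (g2 (z + s *\<^sub>R e)) \<le> M"
    and h: "\<bar>h\<bar> \<le> 1"
  shows "norm (g (z + h *\<^sub>R e) - g z - h *\<^sub>R g1 z) \<le> h^2 * M"
proof -
  have M: "0 \<le> M" using g2_le[of 0] by (simp add: order_trans[OF norm_ge_zero])
  have "norm (g (z + h *\<^sub>R e) - g (z + 0 *\<^sub>R e) - (h - 0) *\<^sub>R g1 (z + 0 *\<^sub>R e))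
      \<le> norm (h - 0) * (\<bar>h\<bar> * M)"
  proof (rule vector_differentiable_bound_linearization[where S="closed_segment 0 h"])
    show "((\<lambda>s. g (z + s *\<^sub>R e)) has_vector_derivative g1 (z + x *\<^sub>R e)) (at x within closed_segment 0 h)"
      for x
      using dg[of x] by (rule has_vector_derivative_at_within)
    show "norm (g1 (z + x *\<^sub>R e) - g1 (z + 0 *\<^sub>R e)) \<le> \<bar>h\<bar> * M" if x: "x \<in> closed_segment 0 h" for x
    proof -
      have xh: "\<bar>x\<bar> \<le> \<bar>h\<bar>" using x by (auto simp: closed_segment_eq_real_ivl split: if_splits)
      have "norm (g1 (z + x *\<^sub>R e) - g1 (z + 0 *\<^sub>R e)) \<le> M * \<bar>x - 0\<bar>"
      proof (rule norm_diff_le_vector_derivative_bound[where f="\<lambda>s. g1 (z + s *\<^sub>R e)"])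
        show "norm (g2 (z + s *\<^sub>R e)) \<le> M" if "s \<in> closed_segment 0 x" for s
          using that xh h by (intro g2_le) (auto simp: closed_segment_eq_real_ivl split: if_splits)
      qed (rule dg1)
      with xh M show ?thesis by simp (metis mult.commute mult_left_mono order_trans)
    qed
  qed auto
  then show ?thesis by (simp add: power2_eq_square abs_mult_self_eq mult.assoc)
qed

lemma has_vector_derivative_at_0_of_quadratic_remainder:
  fixes F :: "real \<Rightarrow> 'b::real_normed_vector"
  assumes "\<And>h. \<bar>h\<bar> \<le> 1 \<Longrightarrow> norm (F h - F 0 - h *\<^sub>R D) \<le> M * h^2"
  shows "(F has_vector_derivative D) (at 0)"
  unfolding has_vector_derivative_def has_derivative_at
proof (intro conjI)
  show "bounded_linear (\<lambda>h. h *\<^sub>R D)" by (rule bounded_linear_scaleR_left)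
  have "norm (F h - F 0 - h *\<^sub>R D) / norm h \<le> M * \<bar>h\<bar>" if "h \<noteq> 0" "\<bar>h\<bar> < 1" for h :: real
  proof -
    have "norm (F h - F 0 - h *\<^sub>R D) / \<bar>h\<bar> \<le> M * h^2 / \<bar>h\<bar>"
      using assms[of h] that by (simp add: divide_right_mono)
    also have "M * h^2 / \<bar>h\<bar> = M * (\<bar>h\<bar> * \<bar>h\<bar> / \<bar>h\<bar>)"
      by (metis abs_mult_self_eq power2_eq_square times_divide_eq_right)
    also have "\<bar>h\<bar> * \<bar>h\<bar> / \<bar>h\<bar> = \<bar>h\<bar>"
      using that(1) by (simp only: nonzero_mult_div_cancel_left abs_eq_0 not_False_eq_True)
    finally show ?thesis by simp
  qed
  then have "\<forall>\<^sub>F h in at 0. norm (norm (F (0 + h) - F 0 - h *\<^sub>R D) / norm h) \<le> M * \<bar>h\<bar>"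
    unfolding eventually_at by (intro exI[of _ 1]) (auto simp: dist_real_def)
  moreover have "((\<lambda>h. M * \<bar>h\<bar>) \<longlongrightarrow> 0) (at 0)"
    by (auto intro!: tendsto_eq_intros)
  ultimately show "(\<lambda>h. norm (F (0 + h) - F 0 - h *\<^sub>R D) / norm h) \<midarrow>0\<rightarrow> 0"
    by (rule Lim_null_comparison)
qed

text \<open>
  The second-order Taylor remainder of \<open>g\<close> along \<open>e\<close> is dominated, uniformly in
  the step \<open>|h| \<le> 1\<close>, by the integrable function \<open>h\<^sup>2 H\<close>.
\<close>
lemma has_vector_derivative_convolution:
  fixes v g g1 g2 :: "'a::euclidean_space \<Rightarrow> complex"
  assumes v: "v \<in> borel_measurable lborel" and B: "AE y in lborel. norm (v y) \<le> B"
    and g: "integrable lborel g" and g1: "integrable lborel g1"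
    and dg: "\<And>z s. ((\<lambda>t. g (z + t *\<^sub>R e)) has_vector_derivative g1 (z + s *\<^sub>R e)) (at s)"
    and dg1: "\<And>z s. ((\<lambda>t. g1 (z + t *\<^sub>R e)) has_vector_derivative g2 (z + s *\<^sub>R e)) (at s)"
    and H: "integrable lborel H" and g2_le: "\<And>z s. \<bar>s\<bar> \<le> 1 \<Longrightarrow> norm (g2 (z + s *\<^sub>R e)) \<le> H z"
  shows "((\<lambda>t. LINT y|lborel. v y * g (x + t *\<^sub>R e - y)) has_vector_derivative
           (LINT y|lborel. v y * g1 (x - y))) (at 0)"
proof (rule has_vector_derivative_at_0_of_quadratic_remainder)
  fix h :: real assume h: "\<bar>h\<bar> \<le> 1"
  define R where "R y = g (x + h *\<^sub>R e - y) - g (x - y) - h *\<^sub>R g1 (x - y)" for y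
  have int_g: "integrable lborel (\<lambda>y. v y * g (w - y))" for w
    by (rule integrable_bounded_mult[OF v B integrable_lborel_reflect_shift[OF g]])
  have int_g1: "integrable lborel (\<lambda>y. v y * g1 (w - y))" for w
    by (rule integrable_bounded_mult[OF v B integrable_lborel_reflect_shift[OF g1]])
  have int_R: "integrable lborel R"
    unfolding R_def using g g1
    by (intro Bochner_Integration.integrable_diff integrable_scaleR_right integrable_lborel_reflect_shift)
  have "(LINT y|lborel. v y * g (x + h *\<^sub>R e - y)) - (LINT y|lborel. v y * g (x + 0 *\<^sub>R e - y))
      - h *\<^sub>R (LINT y|lborel. v y * g1 (x - y))
      = (LINT y|lborel. v y * g (x + h *\<^sub>R e - y) - v y * g (x - y) - h *\<^sub>R (v y * g1 (x - y)))"
    using int_g[of "x + h *\<^sub>R e"] int_g[of x] int_g1[of x] by simp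
  also have "\<dots> = (LINT y|lborel. v y * R y)"
    unfolding R_def by (intro Bochner_Integration.integral_cong) (auto simp: algebra_simps scaleR_conv_of_real)
  also have "norm \<dots> \<le> B * (LINT y|lborel. norm (R y))"
    by (rule norm_integral_bounded_mult_le[OF v B int_R])
  also have "(LINT y|lborel. norm (R y)) \<le> (LINT y|lborel. h^2 * H (x - y))"
  proof (rule integral_mono)
    show "integrable lborel (\<lambda>y. norm (R y))" using int_R by auto
    show "integrable lborel (\<lambda>y. h^2 * H (x - y))"
      using integrable_lborel_reflect_shift[OF H] by auto
    show "norm (R y) \<le> h^2 * H (x - y)" for y
      using taylor_remainder_along_direction_le[OF dg dg1 g2_le h, of "x - y"]
      by (simp add: R_def algebra_simps)
  qed
  also have "(LINT y|lborel. h^2 * H (x - y)) = h^2 * (LINT y|lborel. H y)"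
    using integral_lborel_reflect_shift[OF H, of x] by simp
  finally have "norm ((LINT y|lborel. v y * g (x + h *\<^sub>R e - y))
      - (LINT y|lborel. v y * g (x + 0 *\<^sub>R e - y)) - h *\<^sub>R (LINT y|lborel. v y * g1 (x - y)))
      \<le> B * (h^2 * (LINT y|lborel. H y))"
    using AE_norm_bound_nonneg[OF B] by (simp add: mult_left_mono)
  then show "norm ((LINT y|lborel. v y * g (x + h *\<^sub>R e - y))
      - (LINT y|lborel. v y * g (x + 0 *\<^sub>R e - y)) - h *\<^sub>R (LINT y|lborel. v y * g1 (x - y)))
      \<le> (B * (LINT y|lborel. H y)) * h^2"
    by (simp add: mult_ac)
qed


section \<open>Schwartz functions and their dilations\<close>

lemma schwartz_continuous_pdl:
  assumes "schwartz \<kappa>" shows "continuous_on UNIV (pdl js \<kappa>)"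
  using assms by (simp add: schwartz_def smoothm_def)

lemma schwartz_has_vector_derivative_pdl:
  fixes \<kappa> :: "real^'m \<Rightarrow> complex"
  assumes "schwartz \<kappa>"
  shows "((\<lambda>t. pdl js \<kappa> (z + t *\<^sub>R axis j 1)) has_vector_derivative
           pdl (j # js) \<kappa> (z + s *\<^sub>R axis j 1)) (at s)"
proof -
  define w where "w = z + s *\<^sub>R axis j (1::real)"
  have "(\<lambda>t. pdl js \<kappa> (w + t *\<^sub>R axis j 1)) differentiable (at 0)"
    using assms by (simp add: schwartz_def smoothm_def)
  then have d0: "((\<lambda>t. pdl js \<kappa> (w + t *\<^sub>R axis j 1)) has_vector_derivative pdl (j # js) \<kappa> w) (at 0)"
    using vector_derivative_works by (fastforce simp: pd_def)
  have "((\<lambda>t. t - s) has_vector_derivative 1) (at s)"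
    by (auto intro!: derivative_eq_intros)
  from vector_diff_chain_at[OF this, of "\<lambda>t. pdl js \<kappa> (w + t *\<^sub>R axis j 1)"] d0
  have "(((\<lambda>t. pdl js \<kappa> (w + t *\<^sub>R axis j 1)) \<circ> (\<lambda>t. t - s)) has_vector_derivative pdl (j # js) \<kappa> w) (at s)"
    by simp
  moreover have "(\<lambda>t. pdl js \<kappa> (w + t *\<^sub>R axis j 1)) \<circ> (\<lambda>t. t - s) = (\<lambda>t. pdl js \<kappa> (z + t *\<^sub>R axis j 1))"
    by (auto simp: w_def fun_eq_iff algebra_simps)
  ultimately show ?thesis by (simp add: w_def)
qed

lemma schwartz_pdl_decay:
  fixes \<kappa> :: "real^'m \<Rightarrow> complex"
  assumes "schwartz \<kappa>"
  obtains K where "K \<ge> 0" "\<And>x. norm (pdl js \<kappa> x) \<le> K / (1 + norm x) ^ p"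
proof -
  obtain C where C: "\<And>x. (1 + norm x) ^ p * norm (pdl js \<kappa> x) \<le> C"
    using assms unfolding schwartz_def by blast
  have "norm (pdl js \<kappa> x) \<le> C / (1 + norm x) ^ p" for x
    using C[of x] by (simp add: pos_le_divide_eq mult.commute add_pos_nonneg)
  moreover have "0 \<le> C"
    using C[of 0] by (meson mult_nonneg_nonneg norm_ge_zero order_trans zero_le_power add_nonneg_nonneg zero_le_one)
  ultimately show ?thesis using that by blast
qed

lemma integrable_inverse_one_plus_norm_power_vec:
  "integrable lborel (\<lambda>x::real^'m. 1 / (1 + norm x) ^ (2 * CARD('m)))"
  using integrable_inverse_one_plus_norm_power[where 'a="real^'m"] by simp

lemma schwartz_integrable_pdl:
  fixes \<kappa> :: "real^'m \<Rightarrow> complex"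
  assumes "schwartz \<kappa>"
  shows "integrable lborel (pdl js \<kappa>)"
proof -
  obtain K where K: "K \<ge> 0" "\<And>x. norm (pdl js \<kappa> x) \<le> K / (1 + norm x) ^ (2 * CARD('m))"
    using schwartz_pdl_decay[OF assms] by blast
  show ?thesis
  proof (rule Bochner_Integration.integrable_bound[where f="\<lambda>x. K * (1 / (1 + norm x) ^ (2 * CARD('m)))"])
    show "integrable lborel (\<lambda>x::real^'m. K * (1 / (1 + norm x) ^ (2 * CARD('m))))"
      using integrable_mult_right[OF integrable_inverse_one_plus_norm_power_vec[where 'm='m], of K] by simp
    show "pdl js \<kappa> \<in> borel_measurable lborel"
      using borel_measurable_continuous_onI[OF schwartz_continuous_pdl[OF assms]] by simp
    show "AE x in lborel. norm (pdl js \<kappa> x) \<le> norm (K * (1 / (1 + norm x) ^ (2 * CARD('m))))"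
      using K by (intro AE_I2) (simp add: abs_of_nonneg)
  qed
qed

definition dilate :: "real \<Rightarrow> (real^'m \<Rightarrow> complex) \<Rightarrow> real^'m \<Rightarrow> complex" where
  "dilate \<Gamma> \<kappa> x = complex_of_real (\<Gamma> ^ CARD('m)) * \<kappa> (\<Gamma> *\<^sub>R x)"

lemma chi_gamma_eq_dilate: "chi_gamma \<gamma> \<kappa> \<phi> = dilate (\<gamma> (lm \<phi>)) \<kappa>"
  by (simp add: fun_eq_iff chi_gamma_def dilate_def)

lemma schwartz_has_vector_derivative_pdl_scaled:
  fixes \<kappa> :: "real^'m \<Rightarrow> complex"
  assumes "schwartz \<kappa>"
  shows "((\<lambda>t. of_real c * pdl js \<kappa> (\<Gamma> *\<^sub>R (z + t *\<^sub>R axis j 1))) has_vector_derivative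
          of_real (c * \<Gamma>) * pdl (j # js) \<kappa> (\<Gamma> *\<^sub>R (z + s *\<^sub>R axis j 1))) (at s)"
proof -
  have "((\<lambda>t. \<Gamma> * t) has_vector_derivative \<Gamma>) (at s)"
    by (auto intro!: derivative_eq_intros)
  from vector_diff_chain_at[OF this schwartz_has_vector_derivative_pdl[OF assms]]
  have "((\<lambda>t. pdl js \<kappa> (\<Gamma> *\<^sub>R (z + t *\<^sub>R axis j 1))) has_vector_derivative
      \<Gamma> *\<^sub>R pdl (j # js) \<kappa> (\<Gamma> *\<^sub>R (z + s *\<^sub>R axis j 1))) (at s)"
    by (simp add: o_def scaleR_add_right)
  from has_vector_derivative_mult_right[OF this, of "of_real c"]
  show ?thesis by (simp add: scaleR_conv_of_real mult_ac)
qed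

lemma pdl_dilate:
  fixes \<kappa> :: "real^'m \<Rightarrow> complex"
  assumes "schwartz \<kappa>"
  shows "pdl js (dilate \<Gamma> \<kappa>) = (\<lambda>x. of_real (\<Gamma> ^ CARD('m) * \<Gamma> ^ length js) * pdl js \<kappa> (\<Gamma> *\<^sub>R x))"
proof (induction js)
  case Nil
  then show ?case by (simp add: fun_eq_iff dilate_def)
next
  case (Cons j js)
  show ?case
  proof
    fix x
    have "pdl (j # js) (dilate \<Gamma> \<kappa>) x = vector_derivative
        (\<lambda>t. of_real (\<Gamma> ^ CARD('m) * \<Gamma> ^ length js) * pdl js \<kappa> (\<Gamma> *\<^sub>R (x + t *\<^sub>R axis j 1))) (at 0)"
      by (simp add: pd_def Cons.IH)
    also have "\<dots> = of_real (\<Gamma> ^ CARD('m) * \<Gamma> ^ length js * \<Gamma>) * pdl (j # js) \<kappa> (\<Gamma> *\<^sub>R (x + 0 *\<^sub>R axis j 1))"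
      by (rule vector_derivative_at[OF schwartz_has_vector_derivative_pdl_scaled[OF assms]])
    finally show "pdl (j # js) (dilate \<Gamma> \<kappa>) x
        = of_real (\<Gamma> ^ CARD('m) * \<Gamma> ^ length (j # js)) * pdl (j # js) \<kappa> (\<Gamma> *\<^sub>R x)"
      by (simp add: mult_ac)
  qed
qed

lemma integrable_pdl_dilate:
  fixes \<kappa> :: "real^'m \<Rightarrow> complex"
  assumes "schwartz \<kappa>" "\<Gamma> \<noteq> 0"
  shows "integrable lborel (pdl js (dilate \<Gamma> \<kappa>))"
  using integrable_lborel_affine[OF schwartz_integrable_pdl[OF assms(1)] assms(2), where t=0]
  by (simp add: pdl_dilate[OF assms(1)])

lemma integral_norm_pdl_dilate:
  fixes \<kappa> :: "real^'m \<Rightarrow> complex"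
  assumes "schwartz \<kappa>" "\<Gamma> \<noteq> 0"
  shows "(LINT y|lborel. norm (pdl js (dilate \<Gamma> \<kappa>) y)) = \<bar>\<Gamma>\<bar> ^ length js * (LINT y|lborel. norm (pdl js \<kappa> y))"
proof -
  have "integrable lborel (\<lambda>y. norm (pdl js \<kappa> y))"
    using schwartz_integrable_pdl[OF assms(1)] by auto
  from integral_lborel_affine[OF this assms(2), of 0]
  have "(LINT y|lborel. norm (pdl js \<kappa> y)) = \<bar>\<Gamma>\<bar> ^ CARD('m) * (LINT y|lborel. norm (pdl js \<kappa> (\<Gamma> *\<^sub>R y)))"
    by simp
  moreover have "(LINT y|lborel. norm (pdl js (dilate \<Gamma> \<kappa>) y))
      = \<bar>\<Gamma>\<bar> ^ CARD('m) * \<bar>\<Gamma>\<bar> ^ length js * (LINT y|lborel. norm (pdl js \<kappa> (\<Gamma> *\<^sub>R y)))"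
    by (simp add: pdl_dilate[OF assms(1)] norm_mult norm_power power_abs)
  ultimately show ?thesis by simp
qed

lemma norm_convolution_pdl_dilate_le:
  fixes \<kappa> :: "real^'m \<Rightarrow> complex"
  assumes "schwartz \<kappa>" "\<Gamma> \<noteq> 0"
    and v: "v \<in> borel_measurable lborel" and B: "AE y in lborel. norm (v y) \<le> B"
  shows "norm (LINT y|lborel. v y * pdl js (dilate \<Gamma> \<kappa>) (x - y))
         \<le> B * \<bar>\<Gamma>\<bar> ^ length js * (LINT y|lborel. norm (pdl js \<kappa> y))"
proof -
  note int = integrable_pdl_dilate[OF assms(1,2)]
  have "norm (LINT y|lborel. v y * pdl js (dilate \<Gamma> \<kappa>) (x - y))
     \<le> B * (LINT y|lborel. norm (pdl js (dilate \<Gamma> \<kappa>) (x - y)))"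
    by (rule norm_integral_bounded_mult_le[OF v B integrable_lborel_reflect_shift[OF int]])
  also have "(LINT y|lborel. norm (pdl js (dilate \<Gamma> \<kappa>) (x - y))) = (LINT y|lborel. norm (pdl js (dilate \<Gamma> \<kappa>) y))"
    using integral_lborel_reflect_shift[of "\<lambda>y. norm (pdl js (dilate \<Gamma> \<kappa>) y)" x] int by auto
  finally show ?thesis by (simp add: integral_norm_pdl_dilate[OF assms(1,2)] mult.assoc)
qed

lemma one_plus_norm_le_shift_along_axis:
  fixes z :: "real^'m"
  assumes "\<bar>s\<bar> \<le> 1"
  shows "1 + norm (\<Gamma> *\<^sub>R z) \<le> (1 + \<bar>\<Gamma>\<bar>) * (1 + norm (\<Gamma> *\<^sub>R (z + s *\<^sub>R axis j 1)))"
proof -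
  let ?u = "\<Gamma> *\<^sub>R (z + s *\<^sub>R axis j 1)"
  have "\<Gamma> *\<^sub>R z = ?u - (\<Gamma> * s) *\<^sub>R axis j 1" by (simp add: algebra_simps)
  then have "norm (\<Gamma> *\<^sub>R z) \<le> norm ?u + \<bar>\<Gamma>\<bar> * \<bar>s\<bar>"
    by (metis norm_triangle_ineq4 norm_scaleR norm_axis_1 abs_mult mult.right_neutral)
  also have "\<bar>\<Gamma>\<bar> * \<bar>s\<bar> \<le> \<bar>\<Gamma>\<bar>" using assms by (simp add: mult_left_le)
  finally have "norm (\<Gamma> *\<^sub>R z) \<le> norm ?u + \<bar>\<Gamma>\<bar>" by simp
  moreover have "(1 + \<bar>\<Gamma>\<bar>) * (1 + norm ?u) = 1 + norm ?u + \<bar>\<Gamma>\<bar> + \<bar>\<Gamma>\<bar> * norm ?u"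
    by (simp only: algebra_simps)
  moreover have "0 \<le> \<bar>\<Gamma>\<bar> * norm ?u" by simp
  ultimately show ?thesis by linarith
qed

lemma norm_pdl_dilate_shift_le:
  fixes \<kappa> :: "real^'m \<Rightarrow> complex"
  assumes "schwartz \<kappa>" and K: "K \<ge> 0" "\<And>u. norm (pdl js \<kappa> u) \<le> K / (1 + norm u) ^ p"
    and s: "\<bar>s\<bar> \<le> 1"
  shows "norm (pdl js (dilate \<Gamma> \<kappa>) (z + s *\<^sub>R axis j 1))
    \<le> \<bar>\<Gamma>\<bar> ^ CARD('m) * \<bar>\<Gamma>\<bar> ^ length js * K * (1 + \<bar>\<Gamma>\<bar>) ^ p * (1 / (1 + norm (\<Gamma> *\<^sub>R z)) ^ p)"
proof -
  let ?u = "\<Gamma> *\<^sub>R (z + s *\<^sub>R axis j 1)"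
  have "(1 + norm (\<Gamma> *\<^sub>R z)) ^ p \<le> ((1 + \<bar>\<Gamma>\<bar>) * (1 + norm ?u)) ^ p"
    by (rule power_mono[OF one_plus_norm_le_shift_along_axis[OF s]]) simp
  then have "K * (1 + norm (\<Gamma> *\<^sub>R z)) ^ p \<le> K * ((1 + \<bar>\<Gamma>\<bar>) ^ p * (1 + norm ?u) ^ p)"
    using K(1) by (simp add: mult_left_mono power_mult_distrib)
  then have "K / (1 + norm ?u) ^ p \<le> K * (1 + \<bar>\<Gamma>\<bar>) ^ p * (1 / (1 + norm (\<Gamma> *\<^sub>R z)) ^ p)"
    by (simp add: field_simps add_pos_nonneg)
  with K(2)[of ?u] have "norm (pdl js \<kappa> ?u) \<le> K * (1 + \<bar>\<Gamma>\<bar>) ^ p * (1 / (1 + norm (\<Gamma> *\<^sub>R z)) ^ p)"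
    by linarith
  from mult_left_mono[OF this, of "\<bar>\<Gamma>\<bar> ^ CARD('m) * \<bar>\<Gamma>\<bar> ^ length js"]
  show ?thesis
    by (simp add: pdl_dilate[OF assms(1)] norm_mult norm_power power_abs mult.assoc)
qed

lemma has_vector_derivative_convolution_pdl_dilate:
  fixes \<kappa> :: "real^'m \<Rightarrow> complex"
  assumes sk: "schwartz \<kappa>" and \<Gamma>: "\<Gamma> \<noteq> 0"
    and v: "v \<in> borel_measurable lborel" and B: "AE y in lborel. norm (v y) \<le> B"
  shows "((\<lambda>t. LINT y|lborel. v y * pdl js (dilate \<Gamma> \<kappa>) (x + t *\<^sub>R axis j 1 - y)) has_vector_derivative
          (LINT y|lborel. v y * pdl (j # js) (dilate \<Gamma> \<kappa>) (x - y))) (at 0)"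
proof -
  obtain K where K: "K \<ge> 0" "\<And>u. norm (pdl (j # j # js) \<kappa> u) \<le> K / (1 + norm u) ^ (2 * CARD('m))"
    using schwartz_pdl_decay[OF sk] by blast
  have dpdl: "((\<lambda>t. pdl is (dilate \<Gamma> \<kappa>) (z + t *\<^sub>R axis j 1)) has_vector_derivative
      pdl (j # is) (dilate \<Gamma> \<kappa>) (z + s *\<^sub>R axis j 1)) (at s)" for "is" z s
    using schwartz_has_vector_derivative_pdl_scaled[OF sk, of "\<Gamma> ^ CARD('m) * \<Gamma> ^ length is" "is" \<Gamma> z j s]
    by (simp add: pdl_dilate[OF sk] mult_ac)
  let ?c = "\<bar>\<Gamma>\<bar> ^ CARD('m) * \<bar>\<Gamma>\<bar> ^ length (j # j # js) * K * (1 + \<bar>\<Gamma>\<bar>) ^ (2 * CARD('m))"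
  have "integrable lborel (\<lambda>z::real^'m. 1 / (1 + norm (0 + \<Gamma> *\<^sub>R z)) ^ (2 * CARD('m)))"
    by (rule integrable_lborel_affine[OF integrable_inverse_one_plus_norm_power_vec \<Gamma>])
  from integrable_mult_right[OF this, of ?c]
  have "integrable lborel (\<lambda>z::real^'m. ?c * (1 / (1 + norm (\<Gamma> *\<^sub>R z)) ^ (2 * CARD('m))))"
    by simp
  from has_vector_derivative_convolution[OF v B integrable_pdl_dilate[OF sk \<Gamma>]
      integrable_pdl_dilate[OF sk \<Gamma>] dpdl dpdl this norm_pdl_dilate_shift_le[OF sk K]]
  show ?thesis .
qed


section \<open>Scaling of tensor-product test functions\<close>

definition scale1 :: "real \<Rightarrow> (real \<Rightarrow> complex) \<Rightarrow> real \<Rightarrow> complex" where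
  "scale1 \<epsilon> f t = complex_of_real (1 / \<epsilon>) * f (t / \<epsilon>)"

lemma scale_tensor:
  fixes f :: "real \<Rightarrow> complex"
  shows "Defs.scale \<epsilon> (tensor f :: real^'m \<Rightarrow> complex) = tensor (scale1 \<epsilon> f)"
proof
  fix x :: "real^'m"
  have "tensor (scale1 \<epsilon> f) x = (\<Prod>i\<in>UNIV. complex_of_real (1 / \<epsilon>) * f (x $ i / \<epsilon>))"
    by (simp add: tensor_def scale1_def)
  also have "\<dots> = complex_of_real (1 / \<epsilon>) ^ CARD('m) * (\<Prod>i\<in>UNIV. f (x $ i / \<epsilon>))"
    by (simp only: prod.distrib prod_constant)
  finally show "Defs.scale \<epsilon> (tensor f) x = tensor (scale1 \<epsilon> f) x"
    by (simp add: scale_def tensor_def divide_inverse power_inverse mult.commute)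
qed

lemma support_scale1:
  assumes "\<epsilon> > 0"
  shows "{t. scale1 \<epsilon> f t \<noteq> 0} = (\<lambda>s. \<epsilon> * s) ` {t. f t \<noteq> 0}"
proof (intro set_eqI iffI)
  fix t assume "t \<in> {t. scale1 \<epsilon> f t \<noteq> 0}"
  then have "t / \<epsilon> \<in> {t. f t \<noteq> 0}" by (simp add: scale1_def)
  moreover have "t = \<epsilon> * (t / \<epsilon>)" using assms by simp
  ultimately show "t \<in> (\<lambda>s. \<epsilon> * s) ` {t. f t \<noteq> 0}" by blast
qed (use assms in \<open>auto simp: scale1_def\<close>)

lemma smooth1_scale1:
  assumes "smooth1 f"
  shows "smooth1 (scale1 \<epsilon> f)"
proof -
  obtain D where D0: "D 0 = f" and D: "\<And>n t. (D n has_vector_derivative D (Suc n) t) (at t)"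
    using assms unfolding smooth1_def by blast
  define D' where "D' n t = complex_of_real ((1 / \<epsilon>) ^ Suc n) * D n (t / \<epsilon>)" for n t
  have "D' 0 = scale1 \<epsilon> f" by (simp add: fun_eq_iff D'_def scale1_def D0)
  moreover have "(D' n has_vector_derivative D' (Suc n) t) (at t)" for n t
  proof -
    have "((\<lambda>t. t / \<epsilon>) has_vector_derivative (1 / \<epsilon>)) (at t)"
      by (auto intro!: derivative_eq_intros)
    from vector_diff_chain_at[OF this D]
    have "((D n \<circ> (\<lambda>t. t / \<epsilon>)) has_vector_derivative (1 / \<epsilon>) *\<^sub>R D (Suc n) (t / \<epsilon>)) (at t)" .
    from has_vector_derivative_mult_right[OF this, of "complex_of_real ((1 / \<epsilon>) ^ Suc n)"]
    show ?thesis unfolding D'_def by (simp add: o_def scaleR_conv_of_real mult_ac)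
  qed
  ultimately show ?thesis unfolding smooth1_def by blast
qed

lemma continuous_on_smooth1:
  assumes "smooth1 f" shows "continuous_on UNIV f"
proof -
  obtain D where "D 0 = f" and D: "\<And>n t. (D n has_vector_derivative D (Suc n) t) (at t)"
    using assms unfolding smooth1_def by blast
  then show ?thesis
    by (metis continuous_at_imp_continuous_on has_vector_derivative_continuous)
qed

lemma testfun1_scale1:
  assumes "testfun1 f" "\<epsilon> > 0"
  shows "testfun1 (scale1 \<epsilon> f)"
proof -
  have "bounded (closure {t. f t \<noteq> 0})"
    using assms(1) by (simp add: testfun1_def compact_imp_bounded)
  then have "bounded ((\<lambda>s. \<epsilon> * s) ` {t. f t \<noteq> 0})"
    by (intro bounded_linear_image bounded_linear_mult_right) (meson bounded_subset closure_subset)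
  then show ?thesis
    using assms smooth1_scale1 by (simp add: testfun1_def support_scale1)
qed

lemma A1_scale1:
  assumes "f \<in> A1 q" "\<epsilon> > 0"
  shows "scale1 \<epsilon> f \<in> A1 0"
proof -
  have "(LINT t|lborel. scale1 \<epsilon> f t) = \<bar>\<epsilon>\<bar> *\<^sub>R (LINT x|lborel. scale1 \<epsilon> f (0 + \<epsilon> * x))"
    using assms(2) by (intro lborel_integral_real_affine) simp
  also have "\<dots> = 1"
    using assms by (simp add: A1_def scale1_def scaleR_conv_of_real)
  finally show ?thesis using testfun1_scale1 assms by (simp add: A1_def)
qed

lemma A1_ex_nonzero:
  assumes "f \<in> A1 q" shows "\<exists>t. f t \<noteq> 0"
proof (rule ccontr)
  assume "\<nexists>t. f t \<noteq> 0"
  then have "f = (\<lambda>_. 0)" by auto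
  with assms show False by (simp add: A1_def)
qed

text \<open>
  Evaluating \<open>\<phi> = f \<otimes> \<dots> \<otimes> f\<close> at points \<open>(t, a, \<dots>, a)\<close> with \<open>f a \<noteq> 0\<close> recovers
  \<open>f\<close> up to the factor \<open>f(a)\<^bsup>m-1\<^esup>\<close>, which the normalisation \<open>\<integral> f = 1\<close> fixes.
\<close>
lemma tensor_A1_inj:
  fixes f g :: "real \<Rightarrow> complex"
  assumes f: "f \<in> A1 q" and g: "g \<in> A1 q'" and eq: "(tensor f :: real^'m \<Rightarrow> complex) = tensor g"
  shows "f = g"
proof -
  obtain a where a: "f a \<noteq> 0" using A1_ex_nonzero[OF f] by blast
  obtain i0 :: 'm where True by blast
  have tensor_at: "tensor h (\<chi> i. if i = i0 then t else a) = h t * h a ^ (CARD('m) - 1)"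
    for h :: "real \<Rightarrow> complex" and t
  proof -
    have "tensor h (\<chi> i. if i = i0 then t else a) = h t * (\<Prod>i\<in>UNIV - {i0}. h (if i = i0 then t else a))"
      by (simp add: tensor_def prod.remove[of UNIV i0])
    also have "(\<Prod>i\<in>UNIV - {i0}. h (if i = i0 then t else a)) = (\<Prod>i\<in>UNIV - {i0}. h a)"
      by (intro prod.cong) auto
    finally show ?thesis by (simp add: card_Diff_singleton)
  qed
  define P where "P = f a ^ (CARD('m) - 1)"
  define Q where "Q = g a ^ (CARD('m) - 1)"
  have pointwise: "f t * P = g t * Q" for t
    using tensor_at[of f t] tensor_at[of g t] eq unfolding P_def Q_def by metis
  then have "(LINT t|lborel. f t * P) = (LINT t|lborel. g t * Q)" by simp
  then have "P = Q" using f g by (simp add: A1_def)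
  moreover have "P \<noteq> 0" using a by (simp add: P_def)
  ultimately show ?thesis using pointwise by (auto simp: fun_eq_iff)
qed

lemma lm_scale_tensor:
  assumes f: "f \<in> A1 q" and e: "\<epsilon> > 0"
  shows "lm (Defs.scale \<epsilon> (tensor f :: real^'m \<Rightarrow> complex)) = lsupp (scale1 \<epsilon> f)"
proof -
  have "(THE g. g \<in> A1 0 \<and> (tensor g :: real^'m \<Rightarrow> complex) = Defs.scale \<epsilon> (tensor f)) = scale1 \<epsilon> f"
  proof (rule the_equality)
    show "scale1 \<epsilon> f \<in> A1 0 \<and> (tensor (scale1 \<epsilon> f) :: real^'m \<Rightarrow> complex) = Defs.scale \<epsilon> (tensor f)"
      using A1_scale1[OF f e] scale_tensor by metis
    show "g = scale1 \<epsilon> f" if "g \<in> A1 0 \<and> (tensor g :: real^'m \<Rightarrow> complex) = Defs.scale \<epsilon> (tensor f)" for g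
      using that tensor_A1_inj[OF _ A1_scale1[OF f e], where 'm='m] scale_tensor[of \<epsilon> f, where 'm='m]
      by metis
  qed
  then show ?thesis by (simp add: lm_def)
qed

lemma lsupp_eq_Sup_abs_support: "lsupp f = Sup (abs ` {t. f t \<noteq> 0})"
  unfolding lsupp_def by (simp add: Setcompr_eq_image[symmetric])

lemma bdd_above_abs_support:
  assumes "testfun1 f"
  shows "bdd_above (abs ` {t. f t \<noteq> 0})"
proof -
  have "bounded (closure {t. f t \<noteq> 0})" using assms by (simp add: testfun1_def compact_imp_bounded)
  then have "bounded {t. f t \<noteq> 0}" using bounded_subset closure_subset by blast
  then show ?thesis by (auto simp: bounded_iff bdd_above_def)
qed

lemma lsupp_pos:
  assumes f: "f \<in> A1 q"
  shows "0 < lsupp f"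
proof -
  have tf: "testfun1 f" using f by (simp add: A1_def)
  obtain t0 where t0: "f t0 \<noteq> 0" using A1_ex_nonzero[OF f] by blast
  have "isCont f t0"
    using continuous_on_smooth1[of f] tf by (simp add: testfun1_def continuous_on_eq_continuous_at)
  from continuous_at_avoid[OF this t0]
  obtain e where e: "e > 0" "\<And>y. dist t0 y < e \<Longrightarrow> f y \<noteq> 0" by blast
  define y where "y = (if t0 = 0 then e / 2 else t0)"
  have "f y \<noteq> 0" "y \<noteq> 0"
    using e t0 by (auto simp: y_def dist_real_def)
  then have "0 < \<bar>y\<bar>" "\<bar>y\<bar> \<le> Sup (abs ` {t. f t \<noteq> 0})"
    by (auto intro!: cSup_upper bdd_above_abs_support[OF tf])
  then show ?thesis unfolding lsupp_eq_Sup_abs_support by linarith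
qed

lemma lsupp_scale1:
  assumes f: "f \<in> A1 q" and e: "\<epsilon> > 0"
  shows "lsupp (scale1 \<epsilon> f) = \<epsilon> * lsupp f"
proof -
  let ?S = "abs ` {t. f t \<noteq> 0}"
  have "abs ` {t. scale1 \<epsilon> f t \<noteq> 0} = (\<lambda>r. \<epsilon> * r) ` ?S"
    using e by (auto simp: support_scale1 image_image abs_mult)
  moreover have "\<epsilon> * Sup ?S = Sup ((\<lambda>r. \<epsilon> * r) ` ?S)"
  proof (rule continuous_at_Sup_mono)
    show "mono ((*) \<epsilon>)" using e by (simp add: mono_def mult_left_mono)
    show "continuous (at_left (Sup ?S)) ((*) \<epsilon>)"
      by (rule continuous_mult[OF continuous_const continuous_ident])
    show "?S \<noteq> {}" using A1_ex_nonzero[OF f] by blast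
    show "bdd_above ?S" using f by (intro bdd_above_abs_support) (simp add: A1_def)
  qed
  ultimately show ?thesis by (simp add: lsupp_eq_Sup_abs_support)
qed

lemma lm_scale_Am:
  assumes "\<phi> \<in> (Am N :: (real^'m \<Rightarrow> complex) set)"
  obtains C where "C > 0" "\<And>\<epsilon>. \<epsilon> > 0 \<Longrightarrow> lm (Defs.scale \<epsilon> \<phi>) = C * \<epsilon>"
proof -
  obtain f where f: "f \<in> A1 N" and \<phi>: "\<phi> = tensor f" using assms unfolding Am_def by blast
  have "lm (Defs.scale \<epsilon> \<phi>) = lsupp f * \<epsilon>" if "\<epsilon> > 0" for \<epsilon>
    using lm_scale_tensor[OF f that, where 'm='m] lsupp_scale1[OF f that] by (simp add: \<phi> mult.commute)
  with lsupp_pos[OF f] that show ?thesis by blast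
qed


section \<open>Estimates for the embedded distributions\<close>

definition Linf_bound :: "('a::euclidean_space \<Rightarrow> 'b::real_normed_vector) \<Rightarrow> real" where
  "Linf_bound f = (SOME C. AE y in lborel. norm (f y) \<le> C)"

lemma AE_norm_le_Linf_bound:
  assumes "Linf f"
  shows "AE y in lborel. norm (f y) \<le> Linf_bound f"
proof -
  have "\<exists>C. AE y in lborel. norm (f y) \<le> C" using assms by (simp add: Linf_def)
  then show ?thesis unfolding Linf_bound_def by (rule someI_ex)
qed

lemma Linf_bound_nonneg: "Linf f \<Longrightarrow> 0 \<le> Linf_bound f"
  by (rule AE_norm_bound_nonneg[OF AE_norm_le_Linf_bound])

lemma norm_sum_convolution_pdl_dilate_le:
  fixes \<kappa> :: "real^'m \<Rightarrow> complex" and v :: "'m list \<Rightarrow> real^'m \<Rightarrow> complex"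
  assumes sk: "schwartz \<kappa>" and \<Gamma>: "\<Gamma> \<noteq> 0" and L: "\<forall>js. length js \<le> k \<longrightarrow> Linf (v js)"
  shows "norm (\<Sum>js\<in>{js. length js \<le> k}. LINT y|lborel. v js y * pdl (pre @ js) (dilate \<Gamma> \<kappa>) (x - y))
    \<le> (\<Sum>js\<in>{js. length js \<le> k}. Linf_bound (v js) * (LINT y|lborel. norm (pdl (pre @ js) \<kappa> y)))
        * max 1 \<bar>\<Gamma>\<bar> ^ (length pre + k)"
proof -
  have "norm (LINT y|lborel. v js y * pdl (pre @ js) (dilate \<Gamma> \<kappa>) (x - y))
      \<le> Linf_bound (v js) * (LINT y|lborel. norm (pdl (pre @ js) \<kappa> y)) * max 1 \<bar>\<Gamma>\<bar> ^ (length pre + k)"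
    if "length js \<le> k" for js
  proof -
    have v: "Linf (v js)" using L that by blast
    then have "v js \<in> borel_measurable lborel" by (simp add: Linf_def)
    from norm_convolution_pdl_dilate_le[OF sk \<Gamma> this AE_norm_le_Linf_bound[OF v], of "pre @ js" x]
    have "norm (LINT y|lborel. v js y * pdl (pre @ js) (dilate \<Gamma> \<kappa>) (x - y))
        \<le> Linf_bound (v js) * \<bar>\<Gamma>\<bar> ^ (length pre + length js) * (LINT y|lborel. norm (pdl (pre @ js) \<kappa> y))"
      by simp
    also have "\<dots> \<le> Linf_bound (v js) * max 1 \<bar>\<Gamma>\<bar> ^ (length pre + k) * (LINT y|lborel. norm (pdl (pre @ js) \<kappa> y))"
    proof (intro mult_right_mono mult_left_mono Linf_bound_nonneg[OF v] integral_nonneg_AE AE_I2)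
      have "\<bar>\<Gamma>\<bar> ^ (length pre + length js) \<le> max 1 \<bar>\<Gamma>\<bar> ^ (length pre + length js)"
        by (rule power_mono) auto
      also have "\<dots> \<le> max 1 \<bar>\<Gamma>\<bar> ^ (length pre + k)"
        using that by (intro power_increasing) auto
      finally show "\<bar>\<Gamma>\<bar> ^ (length pre + length js) \<le> max 1 \<bar>\<Gamma>\<bar> ^ (length pre + k)" .
    qed simp
    finally show ?thesis by (simp only: mult_ac)
  qed
  then have "(\<Sum>js\<in>{js. length js \<le> k}. norm (LINT y|lborel. v js y * pdl (pre @ js) (dilate \<Gamma> \<kappa>) (x - y)))
    \<le> (\<Sum>js\<in>{js. length js \<le> k}. Linf_bound (v js) * (LINT y|lborel. norm (pdl (pre @ js) \<kappa> y))
        * max 1 \<bar>\<Gamma>\<bar> ^ (length pre + k))"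
    by (intro sum_mono) simp
  then show ?thesis
    by (simp add: sum_distrib_right order_trans[OF norm_sum])
qed

lemma emb_W_eq_sum_convolution:
  "emb_W \<gamma> \<kappa> k v \<phi> x =
    (\<Sum>js\<in>{js. length js \<le> k}. LINT y|lborel. v js y * pdl js (dilate (\<gamma> (lm \<phi>)) \<kappa>) (x - y))"
  by (simp add: emb_W_def chi_gamma_eq_dilate)

lemma pd_emb_W_eq_sum_convolution:
  fixes \<kappa> :: "real^'m \<Rightarrow> complex" and v :: "'m list \<Rightarrow> real^'m \<Rightarrow> complex"
  assumes sk: "schwartz \<kappa>" and L: "\<forall>js. length js \<le> k \<longrightarrow> Linf (v js)"
    and \<Gamma>: "\<gamma> (lm \<phi>) \<noteq> 0"
  shows "pd j (emb_W \<gamma> \<kappa> k v \<phi>) x =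
    (\<Sum>js\<in>{js. length js \<le> k}. LINT y|lborel. v js y * pdl (j # js) (dilate (\<gamma> (lm \<phi>)) \<kappa>) (x - y))"
proof -
  have "((\<lambda>t. emb_W \<gamma> \<kappa> k v \<phi> (x + t *\<^sub>R axis j 1)) has_vector_derivative
      (\<Sum>js\<in>{js. length js \<le> k}. LINT y|lborel. v js y * pdl (j # js) (dilate (\<gamma> (lm \<phi>)) \<kappa>) (x - y))) (at 0)"
    unfolding emb_W_eq_sum_convolution
  proof (rule has_vector_derivative_sum)
    fix js :: "'m list" assume "js \<in> {js. length js \<le> k}"
    then have v: "Linf (v js)" using L by blast
    then have "v js \<in> borel_measurable lborel" by (simp add: Linf_def)
    from has_vector_derivative_convolution_pdl_dilate[OF sk \<Gamma> this AE_norm_le_Linf_bound[OF v]]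
    show "((\<lambda>t. LINT y|lborel. v js y * pdl js (dilate (\<gamma> (lm \<phi>)) \<kappa>) (x + t *\<^sub>R axis j 1 - y))
        has_vector_derivative (LINT y|lborel. v js y * pdl (j # js) (dilate (\<gamma> (lm \<phi>)) \<kappa>) (x - y))) (at 0)" .
  qed
  then show ?thesis unfolding pd_def by (rule vector_derivative_at)
qed

lemma emb_Linf_eq_emb_W: "emb_Linf \<gamma> \<kappa> u = emb_W \<gamma> \<kappa> 0 (\<lambda>_. u)"
proof -
  have "{js :: 'a list. length js \<le> 0} = {[]}" by auto
  then show ?thesis by (simp add: fun_eq_iff emb_W_def emb_Linf_def)
qed

section \<open>From estimates in \<open>\<gamma>(l(\<phi>))\<close> to types\<close>

lemma eventually_at_right_0_scaledE:
  assumes "eventually P (at_right (0::real))" "C > 0"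
  obtains \<eta> where "0 < \<eta>" "\<eta> < 1" "\<And>\<epsilon>. 0 < \<epsilon> \<Longrightarrow> \<epsilon> < \<eta> \<Longrightarrow> P (C * \<epsilon>)"
proof -
  obtain b where b: "b > 0" "\<And>y. y > 0 \<Longrightarrow> y < b \<Longrightarrow> P y"
    using assms(1) unfolding eventually_at_right_field by auto
  show ?thesis
  proof (rule that[of "min (1/2) (b / C)"])
    show "0 < min (1/2) (b / C)" using b assms(2) by simp
    fix \<epsilon> assume "0 < \<epsilon>" "\<epsilon> < min (1/2) (b / C)"
    with assms(2) show "P (C * \<epsilon>)" by (intro b) (simp_all add: pos_less_divide_eq mult.commute)
  qed simp
qed

lemma rho_typeI:
  fixes U :: "(real^'m \<Rightarrow> complex) \<Rightarrow> real^'m \<Rightarrow> complex"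
  assumes bound: "\<And>\<phi> y. 1 \<le> \<gamma> (lm \<phi>) \<Longrightarrow> norm (U \<phi> y) \<le> A * \<gamma> (lm \<phi>) ^ n"
    and ev: "eventually (\<lambda>r. 1 \<le> \<gamma> r \<and> \<gamma> r ^ n \<le> \<rho> r) (at_right 0)"
  shows "rho_type \<rho> U"
  unfolding rho_type_def
proof (intro exI[of _ "nat \<lceil>A\<rceil>"] ballI)
  fix \<phi> :: "real^'m \<Rightarrow> complex" assume \<phi>: "\<phi> \<in> Am (nat \<lceil>A\<rceil>)"
  obtain C where C: "C > 0" "\<And>\<epsilon>. \<epsilon> > 0 \<Longrightarrow> lm (Defs.scale \<epsilon> \<phi>) = C * \<epsilon>"
    using lm_scale_Am[OF \<phi>] by blast
  obtain \<eta> where \<eta>: "0 < \<eta>" "\<eta> < 1"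
    "\<And>\<epsilon>. 0 < \<epsilon> \<Longrightarrow> \<epsilon> < \<eta> \<Longrightarrow> 1 \<le> \<gamma> (C * \<epsilon>) \<and> \<gamma> (C * \<epsilon>) ^ n \<le> \<rho> (C * \<epsilon>)"
    using eventually_at_right_0_scaledE[OF ev C(1)] by blast
  have "norm (U (Defs.scale \<epsilon> \<phi>) y) \<le> real (nat \<lceil>A\<rceil>) * \<rho> (C * \<epsilon>)" if "0 < \<epsilon>" "\<epsilon> < \<eta>" for \<epsilon> y
  proof -
    have \<gamma>: "1 \<le> \<gamma> (C * \<epsilon>)" "\<gamma> (C * \<epsilon>) ^ n \<le> \<rho> (C * \<epsilon>)" using \<eta>(3) that by auto
    have "norm (U (Defs.scale \<epsilon> \<phi>) y) \<le> A * \<gamma> (C * \<epsilon>) ^ n"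
      using bound[of "Defs.scale \<epsilon> \<phi>" y] C(2) that \<gamma>(1) by simp
    also have "\<dots> \<le> real (nat \<lceil>A\<rceil>) * \<gamma> (C * \<epsilon>) ^ n"
      using \<gamma>(1) by (intro mult_right_mono) (linarith, simp)
    also have "\<dots> \<le> real (nat \<lceil>A\<rceil>) * \<rho> (C * \<epsilon>)"
      using \<gamma>(2) by (intro mult_left_mono) simp_all
    finally show ?thesis .
  qed
  with C(1) \<eta>(1,2)
  show "\<exists>C>0. \<exists>\<eta>. 0 < \<eta> \<and> \<eta> < 1 \<and> (\<forall>\<epsilon>. 0 < \<epsilon> \<and> \<epsilon> < \<eta> \<longrightarrow>
      (\<forall>y. norm (U (Defs.scale \<epsilon> \<phi>) y) \<le> real (nat \<lceil>A\<rceil>) * \<rho> (C * \<epsilon>)))"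
    by blast
qed

lemma bounded_typeI:
  fixes U :: "(real^'m \<Rightarrow> complex) \<Rightarrow> real^'m \<Rightarrow> complex"
  assumes bound: "\<And>\<phi> y. 1 \<le> \<gamma> (lm \<phi>) \<Longrightarrow> norm (U \<phi> y) \<le> A"
    and ev: "eventually (\<lambda>r. 1 \<le> \<gamma> r) (at_right 0)"
  shows "bounded_type U"
  unfolding bounded_type_def
proof (intro exI[of _ "0::nat"] ballI)
  fix \<phi> :: "real^'m \<Rightarrow> complex" assume \<phi>: "\<phi> \<in> Am 0"
  obtain C where C: "C > 0" "\<And>\<epsilon>. \<epsilon> > 0 \<Longrightarrow> lm (Defs.scale \<epsilon> \<phi>) = C * \<epsilon>"
    using lm_scale_Am[OF \<phi>] by blast
  obtain \<eta> where \<eta>: "0 < \<eta>" "\<And>\<epsilon>. 0 < \<epsilon> \<Longrightarrow> \<epsilon> < \<eta> \<Longrightarrow> 1 \<le> \<gamma> (C * \<epsilon>)"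
    using eventually_at_right_0_scaledE[OF ev C(1)] by blast
  have "norm (U (Defs.scale \<epsilon> \<phi>) y) \<le> max A 1" if "0 < \<epsilon>" "\<epsilon> < \<eta>" for \<epsilon> y
    using bound[of "Defs.scale \<epsilon> \<phi>" y] C(2) \<eta>(2) that by simp
  then show "\<exists>C>0. \<exists>\<eta>>0. \<forall>\<epsilon>. 0 < \<epsilon> \<and> \<epsilon> < \<eta> \<longrightarrow> (\<forall>y. norm (U (Defs.scale \<epsilon> \<phi>) y) \<le> C)"
    using \<eta>(1) by (intro exI[of _ "max A 1"]) auto
qed

lemma emb_W_rho_type:
  fixes \<kappa> :: "real^'m \<Rightarrow> complex" and v :: "'m list \<Rightarrow> real^'m \<Rightarrow> complex"
  assumes sk: "schwartz \<kappa>" and L: "\<forall>js. length js \<le> k \<longrightarrow> Linf (v js)"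
    and ev: "eventually (\<lambda>r. 1 \<le> \<gamma> r \<and> \<gamma> r ^ k \<le> \<rho> r) (at_right 0)"
  shows "rho_type \<rho> (emb_W \<gamma> \<kappa> k v)"
proof (rule rho_typeI[OF _ ev])
  fix \<phi> :: "real^'m \<Rightarrow> complex" and y assume "1 \<le> \<gamma> (lm \<phi>)"
  with norm_sum_convolution_pdl_dilate_le[OF sk _ L, of "\<gamma> (lm \<phi>)" "[]" y]
  show "norm (emb_W \<gamma> \<kappa> k v \<phi> y) \<le> (\<Sum>js\<in>{js. length js \<le> k}.
      Linf_bound (v js) * (LINT y|lborel. norm (pdl js \<kappa> y))) * \<gamma> (lm \<phi>) ^ k"
    by (simp add: emb_W_eq_sum_convolution)
qed

lemma pd_emb_W_rho_type:
  fixes \<kappa> :: "real^'m \<Rightarrow> complex" and v :: "'m list \<Rightarrow> real^'m \<Rightarrow> complex"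
  assumes sk: "schwartz \<kappa>" and L: "\<forall>js. length js \<le> k \<longrightarrow> Linf (v js)"
    and ev: "eventually (\<lambda>r. 1 \<le> \<gamma> r \<and> \<gamma> r ^ Suc k \<le> \<rho> r) (at_right 0)"
  shows "rho_type \<rho> (\<lambda>\<phi>. pd j (emb_W \<gamma> \<kappa> k v \<phi>))"
proof (rule rho_typeI[OF _ ev])
  fix \<phi> :: "real^'m \<Rightarrow> complex" and y assume \<gamma>: "1 \<le> \<gamma> (lm \<phi>)"
  with norm_sum_convolution_pdl_dilate_le[OF sk _ L, of "\<gamma> (lm \<phi>)" "[j]" y]
  show "norm (pd j (emb_W \<gamma> \<kappa> k v \<phi>) y) \<le> (\<Sum>js\<in>{js. length js \<le> k}.
      Linf_bound (v js) * (LINT y|lborel. norm (pdl (j # js) \<kappa> y))) * \<gamma> (lm \<phi>) ^ Suc k"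
    by (simp add: pd_emb_W_eq_sum_convolution[OF sk L])
qed

lemma emb_W_0_bounded_type:
  fixes \<kappa> :: "real^'m \<Rightarrow> complex" and v :: "'m list \<Rightarrow> real^'m \<Rightarrow> complex"
  assumes sk: "schwartz \<kappa>" and L: "\<forall>js. length js \<le> 0 \<longrightarrow> Linf (v js)"
    and ev: "eventually (\<lambda>r. 1 \<le> \<gamma> r) (at_right 0)"
  shows "bounded_type (emb_W \<gamma> \<kappa> 0 v)"
proof (rule bounded_typeI[OF _ ev])
  fix \<phi> :: "real^'m \<Rightarrow> complex" and y assume "1 \<le> \<gamma> (lm \<phi>)"
  with norm_sum_convolution_pdl_dilate_le[OF sk _ L, of "\<gamma> (lm \<phi>)" "[]" y]
  show "norm (emb_W \<gamma> \<kappa> 0 v \<phi> y) \<le> (\<Sum>js\<in>{js::'m list. length js \<le> 0}.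
      Linf_bound (v js) * (LINT y|lborel. norm (pdl js \<kappa> y)))"
    by (simp add: emb_W_eq_sum_convolution)
qed


section \<open>Logarithmic scalings\<close>

lemma eventually_one_le_logfun: "eventually (\<lambda>r. 1 \<le> logfun r) (at_right 0)"
  unfolding logfun_def by real_asymp

lemma filterlim_logfun: "filterlim logfun at_top (at_right 0)"
  unfolding logfun_def by real_asymp

lemma admissible_eventually_one_le:
  assumes "admissible \<gamma>" shows "eventually (\<lambda>r. 1 \<le> \<gamma> r) (at_right 0)"
  using assms by (simp add: admissible_def filterlim_at_top)

lemma root_logfun_le_inverse:
  assumes "0 < r" "1 \<le> logfun r"
  shows "root (Suc k) (logfun r) \<le> 1 / r"
proof -
  have "root (Suc k) (logfun r) \<le> root 1 (logfun r)"
    using assms by (intro real_root_decreasing) auto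
  also have "\<dots> \<le> 1 / r - 1"
    using assms by (simp add: logfun_def ln_le_minus_one)
  finally show ?thesis by simp
qed

lemma filterlim_root_logfun: "filterlim (\<lambda>r. root (Suc k) (logfun r)) at_top (at_right 0)"
  unfolding filterlim_at_top
proof
  fix Z :: real
  have "eventually (\<lambda>r. max Z 1 ^ Suc k \<le> logfun r) (at_right 0)"
    using filterlim_logfun unfolding filterlim_at_top by blast
  then show "eventually (\<lambda>r. Z \<le> root (Suc k) (logfun r)) (at_right 0)"
  proof eventually_elim
    case (elim r)
    have "Z \<le> root (Suc k) (max Z 1 ^ Suc k)"
      by (subst real_root_power_cancel) auto
    also have "\<dots> \<le> root (Suc k) (logfun r)" using elim by simp
    finally show ?case .
  qed
qed

lemma logfun_mult: "0 < s \<Longrightarrow> 0 < r \<Longrightarrow> logfun (s * r) = logfun s + logfun r"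
  by (simp add: logfun_def ln_div ln_mult)

lemma root_logfun_mult_le:
  assumes s: "0 < s" "s < 1" and r: "0 < r" "logfun s \<le> logfun r"
  shows "root (Suc k) (logfun (s * r)) \<le> 2 * root (Suc k) (logfun r)"
proof -
  have "0 < logfun s" using s by (simp add: logfun_def)
  moreover have "logfun (s * r) = logfun s + logfun r"
    using s r by (simp add: logfun_mult)
  ultimately have "root (Suc k) (logfun (s * r)) \<le> root (Suc k) 2 * root (Suc k) (logfun r)"
    using r by (simp add: real_root_mult[symmetric])
  also have "\<dots> \<le> 2 * root (Suc k) (logfun r)"
  proof (rule mult_right_mono)
    show "root (Suc k) 2 \<le> 2"
      using real_root_decreasing[of 1 "Suc k" 2] by simp
    show "0 \<le> root (Suc k) (logfun r)"
      using \<open>0 < logfun s\<close> r by (intro real_root_ge_zero) simp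
  qed
  finally show ?thesis .
qed

lemma admissible_root_logfun: "admissible (\<lambda>r. root (Suc k) (logfun r))"
  unfolding admissible_def
proof (intro conjI ballI filterlim_root_logfun)
  show "continuous_on {0<..<1} (\<lambda>r. root (Suc k) (logfun r))"
    unfolding logfun_def by (intro continuous_intros) auto
  show "0 < root (Suc k) (logfun r)" if "r \<in> {0<..<1}" for r
    using that by (simp add: logfun_def)
  have "eventually (\<lambda>r. 0 < r) (at_right (0::real))"
    by (simp add: eventually_at_right_less)
  with eventually_one_le_logfun
  have "\<forall>\<^sub>F r in at_right 0. norm (root (Suc k) (logfun r)) \<le> 1 * norm (1 / r)"
    by eventually_elim (simp add: root_logfun_le_inverse)
  then show "(\<lambda>r. root (Suc k) (logfun r)) \<in> O[at_right 0](\<lambda>r. 1 / r)"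
    by (rule bigoI)
  show "(\<lambda>r. root (Suc k) (logfun (s * r))) \<in> O[at_right 0](\<lambda>r. root (Suc k) (logfun r))"
    if "s \<in> {0<..<1}" for s
  proof (rule bigoI[where c=2])
    have "eventually (\<lambda>r. logfun s \<le> logfun r) (at_right 0)"
      using filterlim_logfun unfolding filterlim_at_top by blast
    moreover have "eventually (\<lambda>r. 0 < r) (at_right (0::real))"
      by (simp add: eventually_at_right_less)
    ultimately show "\<forall>\<^sub>F r in at_right 0.
        norm (root (Suc k) (logfun (s * r))) \<le> 2 * norm (root (Suc k) (logfun r))"
    proof eventually_elim
      case (elim r)
      have "0 < logfun s" using that by (simp add: logfun_def)
      with elim that have "0 \<le> logfun r" "0 \<le> logfun (s * r)" by (simp_all add: logfun_mult)
      with elim that root_logfun_mult_le[of s r k] show ?case by simp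
    qed
  qed
qed

lemma eventually_root_logfun_power_le:
  assumes "n \<le> Suc k"
  shows "eventually (\<lambda>r. 1 \<le> root (Suc k) (logfun r) \<and> root (Suc k) (logfun r) ^ n \<le> logfun r) (at_right 0)"
  using eventually_one_le_logfun
proof eventually_elim
  case (elim r)
  then have "1 \<le> root (Suc k) (logfun r)" by simp
  moreover from this have "root (Suc k) (logfun r) ^ n \<le> root (Suc k) (logfun r) ^ Suc k"
    by (rule power_increasing[OF assms])
  moreover have "root (Suc k) (logfun r) ^ Suc k = logfun r"
    using elim by (intro real_root_pow_pos2) auto
  ultimately show ?case by simp
qed

theorem mainTheorem4:
  fixes \<kappa> :: "real^'m \<Rightarrow> complex"
  assumes "schwartz \<kappa>" and "(LINT x|lborel. \<kappa> x) = 1"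
  shows
   "((\<forall>v::'m list \<Rightarrow> real^'m \<Rightarrow> complex. (\<forall>js. length js \<le> 1 \<longrightarrow> Linf (v js)) \<longrightarrow>
         rho_type logfun (emb_W logfun \<kappa> 1 v)) \<and>
     (\<forall>u. Linf u \<longrightarrow>
         bounded_type (emb_Linf logfun \<kappa> u) \<and>
         (\<forall>j. rho_type logfun (\<lambda>\<phi>. pd j (emb_Linf logfun \<kappa> u \<phi>)))))
    \<and>
    ((\<forall>\<gamma> k (v::'m list \<Rightarrow> real^'m \<Rightarrow> complex). admissible \<gamma> \<longrightarrow>
         (\<forall>js. length js \<le> k \<longrightarrow> Linf (v js)) \<longrightarrow>
         rho_type (\<lambda>r. (\<gamma> r) ^ k) (emb_W \<gamma> \<kappa> k v)) \<and>
     (\<forall>k (v::'m list \<Rightarrow> real^'m \<Rightarrow> complex). (\<forall>js. length js \<le> k \<longrightarrow> Linf (v js)) \<longrightarrow>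
         (\<exists>\<gamma>. admissible \<gamma> \<and> rho_type logfun (emb_W \<gamma> \<kappa> k v) \<and>
              (\<forall>j. rho_type logfun (\<lambda>\<phi>. pd j (emb_W \<gamma> \<kappa> k v \<phi>))))))"
proof (intro conjI allI impI)
  note sk = assms(1)
  have log: "eventually (\<lambda>r. 1 \<le> logfun r \<and> logfun r ^ 1 \<le> logfun r) (at_right 0)"
    using eventually_one_le_logfun by simp
  show "rho_type logfun (emb_W logfun \<kappa> 1 v)" if "\<forall>js. length js \<le> 1 \<longrightarrow> Linf (v js)" for v
    using emb_W_rho_type[OF sk that log] .
  fix u :: "real^'m \<Rightarrow> complex" assume "Linf u"
  then have L: "\<forall>js::'m list. length js \<le> 0 \<longrightarrow> Linf ((\<lambda>_. u) js)" by simp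
  show "bounded_type (emb_Linf logfun \<kappa> u)"
    using emb_W_0_bounded_type[OF sk L eventually_one_le_logfun] by (simp add: emb_Linf_eq_emb_W)
  show "rho_type logfun (\<lambda>\<phi>. pd j (emb_Linf logfun \<kappa> u \<phi>))" for j
    using pd_emb_W_rho_type[OF sk L] log by (simp add: emb_Linf_eq_emb_W)
next
  fix \<gamma> k and v :: "'m list \<Rightarrow> real^'m \<Rightarrow> complex"
  assume "admissible \<gamma>" and L: "\<forall>js. length js \<le> k \<longrightarrow> Linf (v js)"
  then have "eventually (\<lambda>r. 1 \<le> \<gamma> r \<and> \<gamma> r ^ k \<le> \<gamma> r ^ k) (at_right 0)"
    using admissible_eventually_one_le by simp
  with emb_W_rho_type[OF assms(1) L] show "rho_type (\<lambda>r. \<gamma> r ^ k) (emb_W \<gamma> \<kappa> k v)" .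
next
  fix k and v :: "'m list \<Rightarrow> real^'m \<Rightarrow> complex"
  assume L: "\<forall>js. length js \<le> k \<longrightarrow> Linf (v js)"
  let ?\<gamma> = "\<lambda>r. root (Suc k) (logfun r)"
  have "rho_type logfun (emb_W ?\<gamma> \<kappa> k v)"
    by (rule emb_W_rho_type[OF assms(1) L eventually_root_logfun_power_le]) simp
  moreover have "rho_type logfun (\<lambda>\<phi>. pd j (emb_W ?\<gamma> \<kappa> k v \<phi>))" for j
    by (rule pd_emb_W_rho_type[OF assms(1) L eventually_root_logfun_power_le]) simp
  ultimately show "\<exists>\<gamma>. admissible \<gamma> \<and> rho_type logfun (emb_W \<gamma> \<kappa> k v) \<and>
      (\<forall>j. rho_type logfun (\<lambda>\<phi>. pd j (emb_W \<gamma> \<kappa> k v \<phi>)))"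
    using admissible_root_logfun by blast
qed

end
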